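(* Let $\vartheta\in(0,1)$, let $c,r,\alpha,\beta$ be positive integers, and consider the single-agent trust model described in the context. Suppose $\vartheta>\theta_{\rm crit}:=c/(c+r)$. Then almost surely the agent either (A) quits at some finite time, i.e. $\tau<\infty$, with $A_t=1$ for all $t<\tau$ and $A_t=0$ for all $t\ge\tau$; or (B) places trust forever and learns the truth, i.e. $A_t=1$ for all $t=1,2,\dots$ and $\lim_{t\to\infty}\hat\vartheta_t=\vartheta$. In particular $\mathbb{P}(\hat\vartheta_t\not\to\vartheta \text{ and } \tau=\infty)=0$.
   Context: Single-agent trust model: $\vartheta$ is the institution's true trustworthiness; $(X_t)_{t\in\mathbb{N}}$ are i.i.d. with $\mathbb{P}(X_t=1)=\vartheta$, $\mathbb{P}(X_t=0)=1-\vartheta$. The agent has actions $A_t\in\{0,1\}$ and observes $X_t$ only in rounds with $A_t=1$. Let $\hat S_t=\sum_{s=1}^t X_s\mathbf{1}_{\{A_s=1\}}$, $\hat F_t=\sum_{s=1}^t(1-X_s)\mathbf{1}_{\{A_s=1\}}$, and $\hat\vartheta_t=\frac{\alpha+\hat S_t}{\alpha+\beta+\hat S_t+\hat F_t}$ (posterior mean under a Beta$(\alpha,\beta)$ prior). The agent acts myopically: $A_t=1$ if $r\hat\vartheta_n-c(1-\hat\vartheta_n)\ge 0$ for all $n\in\{0,\dots,t-1\}$, and $A_t=0$ otherwise. The quitting time is $\tau:=\inf\{t\in\mathbb{N}\cup\{\infty\}: r\hat\vartheta_t-c(1-\hat\vartheta_t)<0\}$. *)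

theory Defs
  imports "HOL-Probability.Probability"
begin

text \<open>Single-agent trust model. Outcomes X t w :: bool (True = 1), actions A t w :: bool
  (True = 1), rounds t = 1,2,...\<close>

definition Shat :: "(nat \<Rightarrow> 'a \<Rightarrow> bool) \<Rightarrow> (nat \<Rightarrow> 'a \<Rightarrow> bool) \<Rightarrow> nat \<Rightarrow> 'a \<Rightarrow> real" where
  "Shat X A t w = (\<Sum>s\<in>{1..t}. if X s w \<and> A s w then 1 else 0)"

definition Fhat :: "(nat \<Rightarrow> 'a \<Rightarrow> bool) \<Rightarrow> (nat \<Rightarrow> 'a \<Rightarrow> bool) \<Rightarrow> nat \<Rightarrow> 'a \<Rightarrow> real" where
  "Fhat X A t w = (\<Sum>s\<in>{1..t}. if \<not> X s w \<and> A s w then 1 else 0)"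

definition theta_hat :: "real \<Rightarrow> real \<Rightarrow> (nat \<Rightarrow> 'a \<Rightarrow> bool) \<Rightarrow> (nat \<Rightarrow> 'a \<Rightarrow> bool) \<Rightarrow> nat \<Rightarrow> 'a \<Rightarrow> real" where
  "theta_hat \<alpha> \<beta> X A t w =
     (\<alpha> + Shat X A t w) / (\<alpha> + \<beta> + Shat X A t w + Fhat X A t w)"

definition quit_time :: "real \<Rightarrow> real \<Rightarrow> (nat \<Rightarrow> 'a \<Rightarrow> real) \<Rightarrow> 'a \<Rightarrow> enat" where
  "quit_time r c th w =
     (if \<exists>t. r * th t w - c * (1 - th t w) < 0
      then enat (LEAST t. r * th t w - c * (1 - th t w) < 0) else \<infinity>)"

end

theory Submission
  imports Defs
begin

text \<open>Unwinding the decision rule shows that \<open>A\<^sub>t = 1\<close> exactly for \<open>t \<le> \<tau>\<close>, which already gives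
  alternative (A) whenever \<open>\<tau> < \<infinity>\<close>. If \<open>\<tau> = \<infinity>\<close>, the agent observes every round, so the posterior
  mean is \<open>(\<alpha> + S\<^sub>t) / (\<alpha> + \<beta> + t)\<close> with \<open>S\<^sub>t\<close> the number of successes among the first \<open>t\<close>
  rounds; it tends to \<open>\<vartheta>\<close> whenever \<open>S\<^sub>t / t\<close> does. The latter holds almost surely by the strong law
  of large numbers for Bernoulli variables, which follows from Hoeffding's inequality and the
  Borel-Cantelli lemma because the deviation probabilities decay geometrically.\<close>

definition successes :: "(nat \<Rightarrow> 'a \<Rightarrow> bool) \<Rightarrow> nat \<Rightarrow> 'a \<Rightarrow> real" where
  "successes X n w = (\<Sum>i\<in>{1..n}. if X i w then 1 else 0)"

lemma (in prob_space) Hoeffding_bernoulli_mean_abs_ge: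
  fixes X :: "nat \<Rightarrow> 'a \<Rightarrow> bool"
  assumes rv: "\<And>t. X t \<in> measurable M (count_space UNIV)"
    and indep: "indep_vars (\<lambda>_. count_space UNIV) X UNIV"
    and bern: "\<And>t. prob {w \<in> space M. X t w} = p"
    and n: "n \<ge> 1" and e: "e \<ge> 0"
  shows "prob {w \<in> space M. e \<le> \<bar>successes X n w / real n - p\<bar>} \<le> 2 * exp (-2 * e\<^sup>2) ^ n"
proof -
  define Y where "Y = (\<lambda>i w. if X i w then 1 else (0::real))"
  have indep_Y: "indep_vars (\<lambda>_. borel) Y {1..n}"
    unfolding Y_def
    by (rule indep_vars_compose2[where M'="\<lambda>_. count_space UNIV", simplified])
       (rule indep_vars_subset[OF indep], auto)
  have expectation_Y: "expectation (Y i) = p" for i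
  proof -
    have "{w \<in> space M. X i w} \<in> events"
      using measurable_sets[OF rv, of "{True}" i] by (simp add: vimage_def Int_def conj_commute)
    moreover have "expectation (Y i) = expectation (indicator {w \<in> space M. X i w})"
      by (rule Bochner_Integration.integral_cong) (auto simp: Y_def indicator_def)
    ultimately show ?thesis using bern[of i] by simp
  qed
  interpret Hoeffding_ineq M "{1..n}" Y "\<lambda>_. 0" "\<lambda>_. 1" "real n * p"
    using indep_Y by unfold_locales (simp_all add: expectation_Y, simp add: Y_def)
  have "{w \<in> space M. e \<le> \<bar>successes X n w / real n - p\<bar>}
        = {w \<in> space M. real n * e \<le> \<bar>(\<Sum>i\<in>{1..n}. Y i w) - real n * p\<bar>}"
    using n by (auto simp: successes_def Y_def field_simps abs_divide)
  also have "prob \<dots> \<le> 2 * exp (-2 * (real n * e)\<^sup>2 / (\<Sum>i\<in>{1..n}. (1 - 0)\<^sup>2))"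
    using n e by (intro Hoeffding_ineq_abs_ge) auto
  also have "\<dots> = 2 * exp (real n * (-2 * e\<^sup>2))"
    using n by (simp add: power2_eq_square)
  also have "\<dots> = 2 * exp (-2 * e\<^sup>2) ^ n"
    by (simp only: exp_of_nat_mult)
  finally show ?thesis .
qed

lemma (in prob_space) strong_law_bernoulli:
  fixes X :: "nat \<Rightarrow> 'a \<Rightarrow> bool"
  assumes rv: "\<And>t. X t \<in> measurable M (count_space UNIV)"
    and indep: "indep_vars (\<lambda>_. count_space UNIV) X UNIV"
    and bern: "\<And>t. prob {w \<in> space M. X t w} = p"
  shows "AE w in M. (\<lambda>n. successes X n w / real n) \<longlonglongrightarrow> p"
proof -
  have measurable_successes: "successes X n \<in> borel_measurable M" for n
    unfolding successes_def using rv by measurable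
  define deviation where
    "deviation k n = {w \<in> space M. 1 / Suc k \<le> \<bar>successes X n w / real n - p\<bar>}" for k n
  have rare_deviations: "AE w in M. \<forall>\<^sub>F n in sequentially. w \<in> space M - deviation k n" for k
  proof (rule borel_cantelli_AE1)
    show "deviation k n \<in> events" for n
      unfolding deviation_def using measurable_successes[of n] by measurable
    show "emeasure M (deviation k n) < \<infinity>" for n
      by (simp add: emeasure_eq_measure)
    define q where "q = exp (-2 * (1 / real (Suc k))\<^sup>2)"
    have "summable (\<lambda>n. 2 * q ^ n)"
      by (intro summable_mult summable_geometric) (simp add: q_def)
    then show "summable (\<lambda>n. prob (deviation k n))"
      by (rule summable_comparison_test'[where N=1])
         (use Hoeffding_bernoulli_mean_abs_ge[OF rv indep bern, of _ "1 / Suc k"]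
           in \<open>simp add: q_def deviation_def\<close>)
  qed
  have "AE w in M. \<forall>\<^sub>F n in sequentially. \<bar>successes X n w / real n - p\<bar> < 1 / Suc k" for k
    using rare_deviations[of k] by (rule eventually_mono) (auto simp: deviation_def elim!: eventually_mono)
  then have "AE w in M. \<forall>k. \<forall>\<^sub>F n in sequentially. \<bar>successes X n w / real n - p\<bar> < 1 / Suc k"
    by (rule AE_all_countable[THEN iffD2, rule_format])
  then show ?thesis
  proof (rule eventually_mono)
    fix w assume close: "\<forall>k. \<forall>\<^sub>F n in sequentially. \<bar>successes X n w / real n - p\<bar> < 1 / Suc k"
    show "(\<lambda>n. successes X n w / real n) \<longlonglongrightarrow> p"
    proof (rule LIMSEQ_I)
      fix \<epsilon> :: real assume "0 < \<epsilon>"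
      then obtain k where k: "1 / Suc k < \<epsilon>"
        using reals_Archimedean by (metis inverse_eq_divide)
      show "\<exists>N. \<forall>n\<ge>N. norm (successes X n w / real n - p) < \<epsilon>"
        using close[rule_format, of k] k unfolding eventually_sequentially by force
    qed
  qed
qed

lemma enat_le_quit_time_iff:
  "enat t \<le> quit_time r c th w \<longleftrightarrow> (\<forall>n<t. r * th n w - c * (1 - th n w) \<ge> 0)"
proof (cases "\<exists>n. r * th n w - c * (1 - th n w) < 0")
  case True
  then have "enat t \<le> quit_time r c th w \<longleftrightarrow> t \<le> (LEAST n. r * th n w - c * (1 - th n w) < 0)"
    by (simp add: quit_time_def)
  also have "\<dots> \<longleftrightarrow> (\<forall>n<t. \<not> r * th n w - c * (1 - th n w) < 0)"
    using True by (meson LeastI_ex not_less_Least not_le order_less_le_trans)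
  finally show ?thesis by (simp add: not_less)
next
  case False
  then show ?thesis
    unfolding quit_time_def if_not_P[OF False] by (simp add: not_less)
qed

lemma theta_hat_of_always_acting:
  assumes "\<forall>s\<in>{1..n}. A s w"
  shows "theta_hat a b X A n w = (a + successes X n w) / (a + b + real n)"
proof -
  have successes: "Shat X A n w = successes X n w"
    unfolding Shat_def successes_def using assms by (intro sum.cong) auto
  have "Shat X A n w + Fhat X A n w = (\<Sum>s\<in>{1..n}. 1)"
    unfolding Shat_def Fhat_def sum.distrib[symmetric] using assms by (intro sum.cong) auto
  then have "a + b + Shat X A n w + Fhat X A n w = a + b + real n"
    by simp
  then show ?thesis
    by (simp add: theta_hat_def successes)
qed

lemma posterior_mean_tendsto:
  fixes s :: "nat \<Rightarrow> real"
  assumes "(\<lambda>n. s n / real n) \<longlonglongrightarrow> p"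
  shows "(\<lambda>n. (a + s n) / (a + b + real n)) \<longlonglongrightarrow> p"
proof -
  have "(\<lambda>n. (a / real n + s n / real n) / ((a + b) / real n + 1)) \<longlonglongrightarrow> (0 + p) / (0 + 1)"
    by (intro tendsto_intros assms) auto
  moreover have "\<forall>\<^sub>F n in sequentially.
    (a / real n + s n / real n) / ((a + b) / real n + 1) = (a + s n) / (a + b + real n)"
    using eventually_gt_at_top[of 0]
  proof eventually_elim
    case (elim n)
    have "(a / real n + s n / real n) / ((a + b) / real n + 1)
          = ((a + s n) / real n) / ((a + b + real n) / real n)"
      using elim by (simp add: add_divide_distrib)
    also have "\<dots> = (a + s n) / (a + b + real n)"
      using elim by simp
    finally show ?case .
  qed
  ultimately show ?thesis
    by (simp add: Lim_transform_eventually)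
qed

lemma quit_or_learn:
  fixes X A :: "nat \<Rightarrow> 'a \<Rightarrow> bool"
  assumes A_def: "\<And>t. 1 \<le> t \<Longrightarrow> A t w \<longleftrightarrow>
         (\<forall>n\<in>{0..t-1}. rr * theta_hat a b X A n w - cc * (1 - theta_hat a b X A n w) \<ge> 0)"
    and conv: "(\<lambda>n. successes X n w / real n) \<longlonglongrightarrow> p"
  shows "(quit_time rr cc (theta_hat a b X A) w < \<infinity> \<and>
              (\<forall>t\<ge>1. enat t \<le> quit_time rr cc (theta_hat a b X A) w \<longrightarrow> A t w) \<and>
              (\<forall>t\<ge>1. enat t > quit_time rr cc (theta_hat a b X A) w \<longrightarrow> \<not> A t w))
         \<or> ((\<forall>t\<ge>1. A t w) \<and> (\<lambda>t. theta_hat a b X A t w) \<longlonglongrightarrow> p)"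
proof -
  have acts: "A t w \<longleftrightarrow> enat t \<le> quit_time rr cc (theta_hat a b X A) w" if "1 \<le> t" for t
    using A_def[OF that] that by (auto simp: enat_le_quit_time_iff)
  show ?thesis
  proof (cases "quit_time rr cc (theta_hat a b X A) w = \<infinity>")
    case True
    with acts have always: "\<forall>t\<ge>1. A t w"
      by simp
    then have "theta_hat a b X A n w = (a + successes X n w) / (a + b + real n)" for n
      by (intro theta_hat_of_always_acting) auto
    with always posterior_mean_tendsto[OF conv] show ?thesis
      by simp
  qed (use acts in \<open>auto simp: not_le\<close>)
qed

theorem lemma3p2:
  fixes M :: "'a measure" and X :: "nat \<Rightarrow> 'a \<Rightarrow> bool" and A :: "nat \<Rightarrow> 'a \<Rightarrow> bool"
    and theta :: real and c r \<alpha> \<beta> :: nat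
  assumes "prob_space M"
    and rv: "\<And>t. X t \<in> measurable M (count_space UNIV)"
    and indep: "prob_space.indep_vars M (\<lambda>_. count_space UNIV) X UNIV"
    and bern: "\<And>t. measure M {w \<in> space M. X t w} = theta"
    and "0 < theta" "theta < 1"
    and "0 < c" "0 < r" "0 < \<alpha>" "0 < \<beta>"
    and A_def: "\<And>t w. 1 \<le> t \<Longrightarrow> A t w \<longleftrightarrow>
         (\<forall>n\<in>{0..t-1}. real r * theta_hat \<alpha> \<beta> X A n w - real c * (1 - theta_hat \<alpha> \<beta> X A n w) \<ge> 0)"
    and crit: "theta > real c / (real c + real r)"
  shows "(AE w in M.
           (quit_time r c (theta_hat \<alpha> \<beta> X A) w < \<infinity> \<and>
              (\<forall>t\<ge>1. enat t \<le> quit_time r c (theta_hat \<alpha> \<beta> X A) w \<longrightarrow> A t w) \<and>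
              (\<forall>t\<ge>1. enat t > quit_time r c (theta_hat \<alpha> \<beta> X A) w \<longrightarrow> \<not> A t w))
         \<or> ((\<forall>t\<ge>1. A t w) \<and> (\<lambda>t. theta_hat \<alpha> \<beta> X A t w) \<longlonglongrightarrow> theta))
       \<and> measure M {w \<in> space M. \<not> ((\<lambda>t. theta_hat \<alpha> \<beta> X A t w) \<longlonglongrightarrow> theta)
                       \<and> quit_time r c (theta_hat \<alpha> \<beta> X A) w = \<infinity>} = 0"
proof -
  interpret prob_space M by fact
  have dichotomy: "AE w in M.
           (quit_time r c (theta_hat \<alpha> \<beta> X A) w < \<infinity> \<and>
              (\<forall>t\<ge>1. enat t \<le> quit_time r c (theta_hat \<alpha> \<beta> X A) w \<longrightarrow> A t w) \<and>
              (\<forall>t\<ge>1. enat t > quit_time r c (theta_hat \<alpha> \<beta> X A) w \<longrightarrow> \<not> A t w))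
         \<or> ((\<forall>t\<ge>1. A t w) \<and> (\<lambda>t. theta_hat \<alpha> \<beta> X A t w) \<longlonglongrightarrow> theta)"
    using strong_law_bernoulli[OF rv indep bern] by (rule eventually_mono) (rule quit_or_learn[OF A_def])
  then have "AE w in M. \<not> (\<not> (\<lambda>t. theta_hat \<alpha> \<beta> X A t w) \<longlonglongrightarrow> theta
                          \<and> quit_time r c (theta_hat \<alpha> \<beta> X A) w = \<infinity>)"
    by (rule eventually_mono) auto
  from AE_E2[OF this] dichotomy show ?thesis
    by (simp add: measure_def)
qed

end
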